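(* Let $g\in L^2(\mathbb R)$ have compact support, and suppose that for every $\epsilon>0$ there is a measurable set $E\subset[0,1]$ with $|E|>0$ such that $\big|\sum_{n\in\mathbb Z}g(t+n)\big|<\epsilon$ for a.e. $t\in E$. Then $(g,1,1)$ is not a Weyl–Heisenberg frame for $L^2(\mathbb R)$.
   Context: For $g\in L^2(\mathbb R)$ and $a,b>0$, $(g,a,b)$ is a Weyl–Heisenberg frame if $(E_{mb}T_{na}g)_{m,n\in\mathbb Z}$ is a frame for $L^2(\mathbb R)$, where $T_{a}g(t)=g(t-a)$ and $E_{b}g(t)=e^{2\pi i bt}g(t)$. $|E|$ denotes Lebesgue measure. *)

theory Defs
  imports "HOL-Analysis.Analysis"
begin

definition L2 :: "(real \<Rightarrow> complex) set" where
  "L2 = {f. f \<in> borel_measurable lebesgue \<and> integrable lebesgue (\<lambda>t. (cmod (f t))^2)}"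

definition l2inner :: "(real \<Rightarrow> complex) \<Rightarrow> (real \<Rightarrow> complex) \<Rightarrow> complex" where
  "l2inner f h = (LINT t|lebesgue. f t * cnj (h t))"

definition l2norm_sq :: "(real \<Rightarrow> complex) \<Rightarrow> real" where
  "l2norm_sq f = (LINT t|lebesgue. (cmod (f t))^2)"

definition transl :: "real \<Rightarrow> (real \<Rightarrow> complex) \<Rightarrow> real \<Rightarrow> complex" where
  "transl a g = (\<lambda>t. g (t - a))"

definition modul :: "real \<Rightarrow> (real \<Rightarrow> complex) \<Rightarrow> real \<Rightarrow> complex" where
  "modul b g = (\<lambda>t. exp (\<i> * complex_of_real (2 * pi * b * t)) * g t)"

definition WH_frame :: "(real \<Rightarrow> complex) \<Rightarrow> real \<Rightarrow> real \<Rightarrow> bool" where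
  "WH_frame g a b \<longleftrightarrow>
     (\<exists>A B. 0 < A \<and> 0 < B \<and>
       (\<forall>f \<in> L2.
          (\<lambda>(m::int, n::int). (cmod (l2inner f (modul (of_int m * b) (transl (of_int n * a) g))))^2)
             summable_on UNIV \<and>
          A * l2norm_sq f \<le>
            (\<Sum>\<^sub>\<infinity>(m::int, n::int) \<in> UNIV. (cmod (l2inner f (modul (of_int m * b) (transl (of_int n * a) g))))^2) \<and>
          (\<Sum>\<^sub>\<infinity>(m::int, n::int) \<in> UNIV. (cmod (l2inner f (modul (of_int m * b) (transl (of_int n * a) g))))^2)
            \<le> B * l2norm_sq f))"

end

theory Submission
  imports Defs
begin

(* Test the lower frame inequality against f_L = sum_{k<L} 1_{E+k}, where E is a subset of [0,1)
   of positive measure on which the periodization sum_n g(s+n) is smaller than eps, only the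
   translates g(s+j) with |j| <= N are nonzero, and these are uniformly bounded (such an E is
   obtained from the hypothesis by removing a null set and passing to a sublevel set of
   sum_{|j|<=N} |g(s+j)|). Since exp(2 pi i m s) has period 1, the coefficient <f_L, E_m T_n g>
   is the m-th Fourier coefficient on [0,1] of 1_E times the conjugate of sum_{k<L} g(s+k-n), so
   Bessel's inequality bounds the sum over m by the integral over E of |sum_{k<L} g(s+k-n)|^2.
   For all but 4N values of n this window sum is either empty or the whole periodization, hence
   the frame sum is at most (C + L eps^2)|E| while ||f_L||^2 = L|E|. Letting L grow, every lower
   frame bound is at most eps^2, and eps is arbitrary. *)

definition fourier_exp :: "int \<Rightarrow> real \<Rightarrow> complex" where
  "fourier_exp m t = exp (\<i> * complex_of_real (2 * pi * of_int m * t))"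

lemma norm_fourier_exp [simp]: "cmod (fourier_exp m t) = 1"
  unfolding fourier_exp_def by (simp add: norm_exp_eq_Re)

lemma fourier_exp_0 [simp]: "fourier_exp 0 = (\<lambda>_. 1)"
  by (simp add: fourier_exp_def fun_eq_iff)

lemma fourier_exp_mult_cnj: "fourier_exp m t * cnj (fourier_exp m' t) = fourier_exp (m - m') t"
  unfolding fourier_exp_def by (simp add: exp_cnj exp_add[symmetric] algebra_simps)

lemma fourier_exp_add_int: "fourier_exp m (t + of_int j) = fourier_exp m t"
proof -
  have "fourier_exp m (t + of_int j) = fourier_exp m t * exp (2 * of_real pi * of_int (m * j) * \<i>)"
    unfolding fourier_exp_def by (simp add: exp_add[symmetric] algebra_simps)
  also have "exp (2 * of_real pi * of_int (m * j) * \<i>) = 1"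
    using exp_integer_2pi[of "of_int (m * j)"] by (simp add: algebra_simps)
  finally show ?thesis by simp
qed

lemma modul_int: "modul (of_int m) h = (\<lambda>t. fourier_exp m t * h t)"
  by (simp add: modul_def fourier_exp_def)

lemma borel_measurable_lebesgue_ident [measurable]:
  "(\<lambda>x::real. x) \<in> borel_measurable lebesgue"
  using id_borel_measurable_lebesgue by (simp add: id_def)

lemma borel_measurable_fourier_exp [measurable]: "fourier_exp m \<in> borel_measurable lebesgue"
  unfolding fourier_exp_def by measurable

lemma borel_measurable_cnj [measurable]:
  "f \<in> borel_measurable M \<Longrightarrow> (\<lambda>x. cnj (f x)) \<in> borel_measurable M"
  by (rule borel_measurable_continuous_on[where f=cnj]) (auto intro: continuous_intros)

lemma integrable_bounded_vanishing_outside_Icc: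
  fixes f :: "real \<Rightarrow> 'a::{banach, second_countable_topology}"
  assumes "f \<in> borel_measurable lebesgue" "\<And>t. norm (f t) \<le> B" "\<And>t. t \<notin> {a..b} \<Longrightarrow> f t = 0"
  shows "integrable lebesgue f"
  by (rule integrableI_bounded_set[where A="{a..b}" and B=B])
     (use assms in \<open>auto simp: emeasure_lborel_Icc_eq\<close>)

lemma integral_fourier_exp_Icc01:
  "(LINT t|lebesgue. indicator {0..1} t *\<^sub>R fourier_exp k t) = (if k = 0 then 1 else 0)"
proof -
  have int: "set_integrable lebesgue {0..1} (fourier_exp k)"
    unfolding set_integrable_def
    by (rule integrable_bounded_vanishing_outside_Icc[where B=1 and a=0 and b=1])
       (measurable, auto simp: indicator_def)
  then have "(LINT t|lebesgue. indicator {0..1} t *\<^sub>R fourier_exp k t) = integral {0..1} (fourier_exp k)"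
    using set_lebesgue_integral_eq_integral(2)[OF int] unfolding set_lebesgue_integral_def by simp
  also have "\<dots> = (if k = 0 then 1 else 0)"
  proof (cases "k = 0")
    case False
    define a where "a = 2 * complex_of_real pi * of_int k * \<i>"
    have "a \<noteq> 0" using False by (simp add: a_def)
    moreover have "fourier_exp k = (\<lambda>t. exp (a * complex_of_real t))"
      by (auto simp: fourier_exp_def a_def fun_eq_iff algebra_simps)
    moreover have "exp a = 1"
      unfolding a_def using exp_integer_2pi[of "of_int k"] by (simp add: algebra_simps)
    ultimately show ?thesis using integral_exp[of 1 a] False by simp
  qed simp
  finally show ?thesis .
qed

lemma integral_mult_cnj_trig_poly:
  fixes h :: "real \<Rightarrow> complex"
  assumes [measurable]: "h \<in> borel_measurable lebesgue" and "\<And>t. cmod (h t) \<le> C"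
    and "\<And>t. t \<notin> {0..1} \<Longrightarrow> h t = 0"
  shows "(LINT t|lebesgue. h t * cnj (\<Sum>m\<in>M. c m * fourier_exp m t))
       = (\<Sum>m\<in>M. cnj (c m) * (LINT t|lebesgue. h t * cnj (fourier_exp m t)))"
proof -
  have "integrable lebesgue (\<lambda>t. h t * cnj (fourier_exp m t))" for m
    by (rule integrable_bounded_vanishing_outside_Icc[where B=C and a=0 and b=1])
       (use assms in \<open>auto simp: norm_mult\<close>)
  moreover have "h t * cnj (\<Sum>m\<in>M. c m * fourier_exp m t) = (\<Sum>m\<in>M. cnj (c m) * (h t * cnj (fourier_exp m t)))" for t
    by (simp add: sum_distrib_left algebra_simps)
  ultimately show ?thesis
    by (simp add: Bochner_Integration.integral_sum)
qed

lemma integral_trig_poly_mult_cnj_fourier_exp: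
  assumes "finite M" "m \<in> M"
  shows "(LINT t|lebesgue. (indicator {0..1} t *\<^sub>R (\<Sum>k\<in>M. c k * fourier_exp k t)) * cnj (fourier_exp m t))
       = c m"
proof -
  have int: "integrable lebesgue (\<lambda>t. c k * (indicator {0..1} t *\<^sub>R fourier_exp (k - m) t))" for k
    by (intro integrable_mult_right integrable_bounded_vanishing_outside_Icc[where B=1 and a=0 and b=1])
       (measurable, auto simp: indicator_def)
  have "(indicator {0..1} t *\<^sub>R (\<Sum>k\<in>M. c k * fourier_exp k t)) * cnj (fourier_exp m t)
      = (\<Sum>k\<in>M. c k * (indicator {0..1} t *\<^sub>R fourier_exp (k - m) t))" for t
    by (simp add: scaleR_sum_right sum_distrib_right fourier_exp_mult_cnj mult.assoc)
  then have "(LINT t|lebesgue. (indicator {0..1} t *\<^sub>R (\<Sum>k\<in>M. c k * fourier_exp k t)) * cnj (fourier_exp m t))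
      = (\<Sum>k\<in>M. c k * (LINT t|lebesgue. indicator {0..1} t *\<^sub>R fourier_exp (k - m) t))"
    by (simp only: Bochner_Integration.integral_sum[OF int] integral_mult_right_zero)
  also have "\<dots> = c m"
    using assms by (simp only: integral_fourier_exp_Icc01) (simp add: if_distrib sum.delta cong: if_cong)
  finally show ?thesis .
qed

lemma norm_trig_poly_le:
  "cmod (\<Sum>m\<in>M. c m * fourier_exp m t) \<le> (\<Sum>m\<in>M. cmod (c m))"
  using norm_sum[of "\<lambda>m. c m * fourier_exp m t" M] by (simp add: norm_mult)

lemma sum_cnj_mult_self: "(\<Sum>m\<in>M. cnj (c m) * c m) = of_real (\<Sum>m\<in>M. (cmod (c m))^2)"
  unfolding of_real_sum by (intro sum.cong refl) (metis complex_norm_square mult.commute)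

lemma integral_trig_poly_mult_cnj_self:
  fixes c :: "int \<Rightarrow> complex"
  assumes "finite M"
  defines "q \<equiv> \<lambda>t. indicator {0..1} t *\<^sub>R (\<Sum>m\<in>M. c m * fourier_exp m t)"
  shows "(LINT t|lebesgue. q t * cnj (q t)) = of_real (\<Sum>m\<in>M. (cmod (c m))^2)"
proof -
  have q_bounded: "cmod (q t) \<le> (\<Sum>m\<in>M. cmod (c m))" for t
    using norm_trig_poly_le[where c=c and M=M and t=t] by (simp add: q_def indicator_def sum_nonneg)
  have q_vanish: "q t = 0" if "t \<notin> {0..1}" for t
    using that by (simp add: q_def)
  have q_meas: "q \<in> borel_measurable lebesgue"
    unfolding q_def by measurable
  have "q t * cnj (q t) = q t * cnj (\<Sum>m\<in>M. c m * fourier_exp m t)" for t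
    by (simp add: q_def indicator_def)
  then have "(LINT t|lebesgue. q t * cnj (q t)) = (LINT t|lebesgue. q t * cnj (\<Sum>m\<in>M. c m * fourier_exp m t))"
    by (simp only:)
  also have "\<dots> = (\<Sum>m\<in>M. cnj (c m) * (LINT t|lebesgue. q t * cnj (fourier_exp m t)))"
    by (rule integral_mult_cnj_trig_poly[OF q_meas q_bounded q_vanish])
  also have "\<dots> = (\<Sum>m\<in>M. cnj (c m) * c m)"
    using assms(1) integral_trig_poly_mult_cnj_fourier_exp by (intro sum.cong refl) (simp add: q_def)
  finally show ?thesis by (simp only: sum_cnj_mult_self)
qed

lemma integral_norm_sq_diff:
  fixes h q :: "'a \<Rightarrow> complex"
  assumes "integrable M (\<lambda>t. (cmod (h t))^2)" "integrable M (\<lambda>t. h t * cnj (q t))"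
    and "integrable M (\<lambda>t. q t * cnj (q t))"
  shows "(LINT t|M. (cmod (h t - q t))^2)
       = (LINT t|M. (cmod (h t))^2) - 2 * Re (LINT t|M. h t * cnj (q t)) + Re (LINT t|M. q t * cnj (q t))"
proof -
  have "(cmod (h t - q t))^2 = (cmod (h t))^2 - 2 * Re (h t * cnj (q t)) + Re (q t * cnj (q t))" for t
    unfolding cmod_power2 by (simp add: power2_eq_square algebra_simps)
  moreover have "(LINT t|M. a t - 2 * b t + c t) = (LINT t|M. a t) - 2 * (LINT t|M. b t) + (LINT t|M. c t)"
    if "integrable M a" "integrable M b" "integrable M c" for a b c :: "'a \<Rightarrow> real"
    using that by simp
  ultimately show ?thesis
    using assms by (simp only: integral_Re[symmetric] integrable_Re)
qed

lemma bessel_inequality_fourier_exp: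
  fixes h :: "real \<Rightarrow> complex"
  assumes [measurable]: "h \<in> borel_measurable lebesgue" and h_bounded: "\<And>t. cmod (h t) \<le> C"
    and h_vanish: "\<And>t. t \<notin> {0..1} \<Longrightarrow> h t = 0" and "finite M"
  shows "(\<Sum>m\<in>M. (cmod (LINT t|lebesgue. h t * cnj (fourier_exp m t)))^2) \<le> (LINT t|lebesgue. (cmod (h t))^2)"
proof -
  define c where "c m = (LINT t|lebesgue. h t * cnj (fourier_exp m t))" for m
  define q where "q t = indicator {0..1} t *\<^sub>R (\<Sum>m\<in>M. c m * fourier_exp m t)" for t
  define D where "D = (\<Sum>m\<in>M. cmod (c m))"
  have "0 \<le> C" "0 \<le> D"
    using h_bounded[of 0] norm_ge_zero order_trans by (blast, simp add: D_def sum_nonneg)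
  have q_bounded: "cmod (q t) \<le> D" for t
    using norm_trig_poly_le[where c=c and M=M and t=t] \<open>0 \<le> D\<close> by (simp add: q_def D_def indicator_def)
  have "h t * cnj (q t) = h t * cnj (\<Sum>m\<in>M. c m * fourier_exp m t)" for t
    by (cases "t \<in> {0..1}") (simp_all add: q_def h_vanish)
  then have "(LINT t|lebesgue. h t * cnj (q t)) = (LINT t|lebesgue. h t * cnj (\<Sum>m\<in>M. c m * fourier_exp m t))"
    by (simp only:)
  also have "\<dots> = (\<Sum>m\<in>M. cnj (c m) * c m)"
    by (rule integral_mult_cnj_trig_poly[OF assms(1) h_bounded h_vanish, folded c_def])
  finally have hq: "(LINT t|lebesgue. h t * cnj (q t)) = of_real (\<Sum>m\<in>M. (cmod (c m))^2)"
    by (simp only: sum_cnj_mult_self)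
  have "integrable lebesgue (\<lambda>t. (cmod (h t))^2)"
    by (rule integrable_bounded_vanishing_outside_Icc[where B="C^2" and a=0 and b=1])
       (measurable, auto simp: h_vanish intro!: power_mono h_bounded)
  moreover have "integrable lebesgue (\<lambda>t. h t * cnj (q t))"
    by (rule integrable_bounded_vanishing_outside_Icc[where B="C*D" and a=0 and b=1])
       (unfold q_def, measurable, auto simp: h_vanish norm_mult q_def[symmetric]
         intro!: mult_mono h_bounded q_bounded \<open>0 \<le> C\<close>)
  moreover have "integrable lebesgue (\<lambda>t. q t * cnj (q t))"
    by (rule integrable_bounded_vanishing_outside_Icc[where B="D*D" and a=0 and b=1])
       (unfold q_def, measurable, auto simp: norm_mult q_def[symmetric] intro!: mult_mono q_bounded \<open>0 \<le> D\<close>)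
  ultimately have "(LINT t|lebesgue. (cmod (h t - q t))^2) = (LINT t|lebesgue. (cmod (h t))^2) - (\<Sum>m\<in>M. (cmod (c m))^2)"
    using hq integral_trig_poly_mult_cnj_self[OF \<open>finite M\<close>, of c]
    by (simp add: integral_norm_sq_diff q_def)
  moreover have "0 \<le> (LINT t|lebesgue. (cmod (h t - q t))^2)"
    by simp
  ultimately show ?thesis
    by (simp add: c_def)
qed

lemma distr_lebesgue_translation: "distr lebesgue lebesgue (\<lambda>x. c + x) = (lebesgue :: real measure)"
  using lebesgue_real_affine[of 1 c] by (simp add: density_1)

lemma measurable_lebesgue_translation [measurable]:
  fixes c :: real
  shows "(\<lambda>x. x + c) \<in> lebesgue \<rightarrow>\<^sub>M lebesgue" and "(\<lambda>x. x - c) \<in> lebesgue \<rightarrow>\<^sub>M lebesgue"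
  using lebesgue_affine_measurable[where c="\<lambda>_. 1" and t=c]
    lebesgue_affine_measurable[where c="\<lambda>_. 1" and t="-c"]
  by (simp_all add: add.commute)

lemma AE_lebesgue_translation:
  fixes c :: real
  assumes "AE t in lebesgue. P t"
  shows "AE s in lebesgue. P (s + c)"
proof -
  have "(\<lambda>x. c + x) \<in> lebesgue \<rightarrow>\<^sub>M lebesgue"
    using measurable_lebesgue_translation(1)[of c] by (simp add: add.commute)
  moreover have "AE t in distr lebesgue lebesgue (\<lambda>x. c + x). P t"
    using assms by (simp only: distr_lebesgue_translation)
  ultimately have "AE s in lebesgue. P (c + s)"
    by (rule AE_distrD)
  then show ?thesis
    by (simp add: add.commute)
qed

lemma integral_lebesgue_translation:
  fixes f :: "real \<Rightarrow> 'b::euclidean_space"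
  shows "(LINT x|lebesgue. f (x + c)) = (LINT x|lebesgue. f x)"
  using lebesgue_integral_real_affine[of 1 f c] by (simp add: add.commute)

lemma integrable_lebesgue_translation_iff:
  fixes f :: "real \<Rightarrow> 'b::euclidean_space"
  shows "integrable lebesgue (\<lambda>x. f (x + c)) \<longleftrightarrow> integrable lebesgue f"
  using lebesgue_integrable_real_affine_iff[where f=f and c=1 and t=c] by (simp add: add.commute)

definition indicator_translates :: "real set \<Rightarrow> nat \<Rightarrow> real \<Rightarrow> complex" where
  "indicator_translates E L t = (\<Sum>k<L. indicator E (t - real k))"

lemma sum_indicator_translates:
  assumes "E \<subseteq> {0..<1}"
  shows "(\<Sum>k<L. indicator E (t - real k)) = indicator (\<Union>k<L. (\<lambda>s. s + real k) ` E) t"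
proof -
  have "disjoint_family_on (\<lambda>k. (\<lambda>s. s + real k) ` E) {..<L}"
    unfolding disjoint_family_on_def
  proof (intro ballI impI)
    fix k k' :: nat assume "k \<noteq> k'"
    have "\<bar>real k - real k'\<bar> < 1" if "s + real k = s' + real k'" "s \<in> E" "s' \<in> E" for s s'
    proof -
      have "s \<in> {0..<1}" "s' \<in> {0..<1}" using that assms by auto
      then show ?thesis using that(1) by (simp add: abs_less_iff)
    qed
    with \<open>k \<noteq> k'\<close> show "(\<lambda>s. s + real k) ` E \<inter> (\<lambda>s. s + real k') ` E = {}"
      by (force simp: abs_less_iff)
  qed
  then have "indicator (\<Union>k<L. (\<lambda>s. s + real k) ` E) t = (\<Sum>k<L. indicator ((\<lambda>s. s + real k) ` E) t)"
    by (rule indicator_UN_disjoint[OF finite_lessThan])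
  also have "\<dots> = (\<Sum>k<L. indicator E (t - real k))"
  proof (intro sum.cong refl)
    fix k :: nat
    show "indicator ((\<lambda>s. s + real k) ` E) t = indicator E (t - real k)"
      unfolding indicator_def by (auto simp: image_iff intro!: bexI[of _ "t - real k"])
  qed
  finally show ?thesis by (rule sym)
qed

lemma l2norm_sq_indicator_translates:
  assumes [measurable]: "E \<in> sets lebesgue" and "E \<subseteq> {0..<1}"
  shows "indicator_translates E L \<in> L2"
    and "l2norm_sq (indicator_translates E L) = real L * measure lebesgue E"
proof -
  have square: "(cmod (indicator_translates E L t))^2 = (\<Sum>k<L. indicator E (t - real k))" for t
    unfolding indicator_translates_def sum_indicator_translates[OF assms(2)]
    by (simp add: indicator_def)
  have "integrable lebesgue (indicator E :: real \<Rightarrow> real)"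
    by (rule integrable_bounded_vanishing_outside_Icc[where B=1 and a=0 and b=1])
       (use \<open>E \<subseteq> {0..<1}\<close> in \<open>auto simp: indicator_def\<close>)
  then have int: "integrable lebesgue (\<lambda>t. indicator E (t - real k) :: real)" for k
    using integrable_lebesgue_translation_iff[of "indicator E :: real \<Rightarrow> real" "- real k"] by simp
  have "indicator_translates E L \<in> borel_measurable lebesgue"
    unfolding indicator_translates_def by measurable
  then show "indicator_translates E L \<in> L2"
    unfolding L2_def mem_Collect_eq square using int by simp
  have "l2norm_sq (indicator_translates E L) = (\<Sum>k<L. LINT t|lebesgue. indicator E (t - real k))"
    unfolding l2norm_sq_def square using int by simp
  also have "\<dots> = real L * measure lebesgue E"
    using integral_lebesgue_translation[of "indicator E :: real \<Rightarrow> real" "- real k" for k] by simp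
  finally show "l2norm_sq (indicator_translates E L) = real L * measure lebesgue E" .
qed

(* Periodicity of fourier_exp m moves the integral over each translate E + k back onto E. *)
lemma l2inner_indicator_translates:
  fixes g :: "real \<Rightarrow> complex"
  assumes [measurable]: "g \<in> borel_measurable lebesgue" "E \<in> sets lebesgue"
    and "E \<subseteq> {0..<1}" and bounded: "\<And>s j. s \<in> E \<Longrightarrow> cmod (g (s + of_int j)) \<le> M"
  shows "l2inner (indicator_translates E L) (modul (of_int m) (transl (of_int n) g))
       = (LINT s|lebesgue. (indicator E s *\<^sub>R cnj (\<Sum>k<L. g (s + of_int (int k - n)))) * cnj (fourier_exp m s))"
proof -
  define H where "H k s = indicator E s * cnj (g (s + of_int (int k - n))) * cnj (fourier_exp m s)" for k s
  have int_H: "integrable lebesgue (H k)" for k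
  proof (rule integrable_bounded_vanishing_outside_Icc[where B="max 0 M" and a=0 and b=1])
    show "H k \<in> borel_measurable lebesgue" unfolding H_def by measurable
    show "cmod (H k s) \<le> max 0 M" for s
      using bounded[of s "int k - n"] by (cases "s \<in> E") (simp_all add: H_def norm_mult)
    show "H k s = 0" if "s \<notin> {0..1}" for s
      using that \<open>E \<subseteq> {0..<1}\<close> by (auto simp: H_def indicator_def)
  qed
  have "indicator E (t - real k) * cnj (fourier_exp m t * g (t - of_int n)) = H k (t - real k)" for k t
    using fourier_exp_add_int[of m "t - real k" "int k"] by (simp add: H_def algebra_simps)
  then have "l2inner (indicator_translates E L) (modul (of_int m) (transl (of_int n) g))
      = (LINT t|lebesgue. (\<Sum>k<L. H k (t - real k)))"
    by (simp add: l2inner_def modul_int transl_def indicator_translates_def sum_distrib_right)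
  also have "\<dots> = (\<Sum>k<L. LINT t|lebesgue. H k (t - real k))"
    using int_H integrable_lebesgue_translation_iff[of "H k" "- real k" for k]
    by (intro Bochner_Integration.integral_sum) simp
  also have "\<dots> = (\<Sum>k<L. LINT s|lebesgue. H k s)"
    using integral_lebesgue_translation[of "H k" "- real k" for k] by simp
  also have "\<dots> = (LINT s|lebesgue. (\<Sum>k<L. H k s))"
    using int_H by (rule Bochner_Integration.integral_sum[symmetric])
  also have "\<dots> = (LINT s|lebesgue. (indicator E s *\<^sub>R cnj (\<Sum>k<L. g (s + of_int (int k - n)))) * cnj (fourier_exp m s))"
    unfolding H_def by (intro Bochner_Integration.integral_cong refl) (simp add: sum_distrib_right indicator_def)
  finally show ?thesis .
qed

lemma sum_WH_coeffs_indicator_translates_le_integrals: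
  fixes g :: "real \<Rightarrow> complex"
  assumes [measurable]: "g \<in> borel_measurable lebesgue" "E \<in> sets lebesgue"
    and "E \<subseteq> {0..<1}" and bounded: "\<And>s j. s \<in> E \<Longrightarrow> cmod (g (s + of_int j)) \<le> M"
    and "finite F"
  shows "(\<Sum>(m, n)\<in>F. (cmod (l2inner (indicator_translates E L) (modul (of_int m) (transl (of_int n) g))))^2)
       \<le> (\<Sum>n\<in>snd ` F. LINT s|lebesgue. indicator E s * (cmod (\<Sum>k<L. g (s + of_int (int k - n))))^2)"
proof -
  define \<phi> where "\<phi> = (\<lambda>(m, n). (cmod (l2inner (indicator_translates E L) (modul (of_int m) (transl (of_int n) g))))^2)"
  define h where "h n s = indicator E s *\<^sub>R cnj (\<Sum>k<L. g (s + of_int (int k - n)))" for n s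
  have bessel: "(\<Sum>m\<in>fst ` F. \<phi> (m, n)) \<le> (LINT s|lebesgue. indicator E s * (cmod (\<Sum>k<L. g (s + of_int (int k - n))))^2)"
    for n
  proof -
    have h_bounded: "cmod (h n s) \<le> real L * max 0 M" for s
    proof (cases "s \<in> E")
      case True
      have "cmod (\<Sum>k<L. g (s + of_int (int k - n))) \<le> (\<Sum>k<L. cmod (g (s + of_int (int k - n))))"
        by (rule norm_sum)
      also have "\<dots> \<le> (\<Sum>k<L. max 0 M)"
        using bounded[OF True] by (intro sum_mono) (meson max.coboundedI2)
      finally show ?thesis using True by (simp add: h_def del: cnj_sum)
    qed (simp add: h_def)
    have h_vanish: "h n s = 0" if "s \<notin> {0..1}" for s
      using that \<open>E \<subseteq> {0..<1}\<close> by (auto simp: h_def indicator_def)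
    have h_meas: "h n \<in> borel_measurable lebesgue"
      unfolding h_def by measurable
    have "(\<Sum>m\<in>fst ` F. \<phi> (m, n)) = (\<Sum>m\<in>fst ` F. (cmod (LINT s|lebesgue. h n s * cnj (fourier_exp m s)))^2)"
      by (simp only: \<phi>_def case_prod_conv l2inner_indicator_translates[OF assms(1-3) bounded] h_def)
    also have "\<dots> \<le> (LINT s|lebesgue. (cmod (h n s))^2)"
      using \<open>finite F\<close> by (intro bessel_inequality_fourier_exp[OF h_meas h_bounded h_vanish] finite_imageI)
    also have "\<dots> = (LINT s|lebesgue. indicator E s * (cmod (\<Sum>k<L. g (s + of_int (int k - n))))^2)"
      by (intro Bochner_Integration.integral_cong refl) (simp add: h_def indicator_def del: cnj_sum)
    finally show ?thesis .
  qed
  have "sum \<phi> F \<le> sum \<phi> (fst ` F \<times> snd ` F)"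
    using \<open>finite F\<close> by (intro sum_mono2) (auto simp: \<phi>_def intro: rev_image_eqI)
  also have "\<dots> = (\<Sum>n\<in>snd ` F. \<Sum>m\<in>fst ` F. \<phi> (m, n))"
    by (simp add: sum.cartesian_product' sum.swap[of _ "fst ` F"])
  also have "\<dots> \<le> (\<Sum>n\<in>snd ` F. LINT s|lebesgue. indicator E s * (cmod (\<Sum>k<L. g (s + of_int (int k - n))))^2)"
    by (intro sum_mono bessel)
  finally show ?thesis by (simp add: \<phi>_def)
qed

lemma sum_translates_eq_sum_window:
  fixes g :: "real \<Rightarrow> complex" and K :: nat
  assumes vanish: "\<And>j. int K < \<bar>j\<bar> \<Longrightarrow> g (s + of_int j) = 0"
  shows "(\<Sum>k<L. g (s + of_int (int k - n)))
       = (\<Sum>j\<in>{-n..int L - 1 - n} \<inter> {-int K..int K}. g (s + of_int j))"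
proof -
  have "(\<Sum>k<L. g (s + of_int (int k - n))) = (\<Sum>j\<in>{-n..int L - 1 - n}. g (s + of_int j))"
    by (rule sum.reindex_bij_witness[where i="\<lambda>j. nat (j + n)" and j="\<lambda>k. int k - n"]) auto
  also have "\<dots> = (\<Sum>j\<in>{-n..int L - 1 - n} \<inter> {-int K..int K}. g (s + of_int j))"
    by (rule sum.mono_neutral_right) (use vanish in auto)
  finally show ?thesis .
qed

lemma set_integral_norm_sq_le:
  fixes G :: "real \<Rightarrow> complex"
  assumes [measurable]: "G \<in> borel_measurable lebesgue" "E \<in> sets lebesgue"
    and "E \<subseteq> {0..1}" and bound: "\<And>s. s \<in> E \<Longrightarrow> cmod (G s) \<le> c"
  shows "(LINT s|lebesgue. indicator E s * (cmod (G s))^2) \<le> c^2 * measure lebesgue E"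
proof -
  have square_bound: "(cmod (G s))^2 \<le> c^2" if "s \<in> E" for s
    using bound[OF that] by (auto intro: power_mono)
  then have pointwise: "indicator E s * (cmod (G s))^2 \<le> indicator E s * c^2" for s
    by (cases "s \<in> E") simp_all
  have "(LINT s|lebesgue. indicator E s * (cmod (G s))^2) \<le> (LINT s|lebesgue. indicator E s * c^2)"
  proof (rule integral_mono[OF _ _ pointwise])
    show "integrable lebesgue (\<lambda>s. indicator E s * c^2)"
      using \<open>E \<subseteq> {0..1}\<close>
      by (intro integrable_bounded_vanishing_outside_Icc[where B="c^2" and a=0 and b=1])
         (measurable, auto simp: indicator_def)
    show "integrable lebesgue (\<lambda>s. indicator E s * (cmod (G s))^2)"
      using \<open>E \<subseteq> {0..1}\<close> square_bound
      by (intro integrable_bounded_vanishing_outside_Icc[where B="c^2" and a=0 and b=1])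
         (measurable, auto simp: indicator_def)
  qed
  then show ?thesis
    by (simp add: mult.commute)
qed

lemma sum_le_window_profile:
  fixes b :: "int \<Rightarrow> real" and K L :: nat and B e :: real
  assumes "finite Ns" and nonneg: "\<And>n. 0 \<le> b n" and bounded: "\<And>n. b n \<le> B"
    and inside: "\<And>n. n \<in> {int K..int L - 1 - int K} \<Longrightarrow> b n \<le> e" and "0 \<le> e"
    and outside: "\<And>n. n \<notin> {-int K..int L - 1 + int K} \<Longrightarrow> b n = 0"
  shows "(\<Sum>n\<in>Ns. b n) \<le> 4 * real K * B + real L * e"
proof -
  define R where "R = {-int K..int L - 1 + int K}"
  define Mid where "Mid = {int K..int L - 1 - int K}"
  have "card (R - Mid) \<le> 4 * K"
    by (subst card_Diff_subset) (auto simp: R_def Mid_def)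
  moreover have "card Mid \<le> L"
    by (simp add: Mid_def)
  moreover have "0 \<le> B"
    using nonneg bounded order_trans by blast
  ultimately have card_bound: "card (R - Mid) * B + card Mid * e \<le> 4 * real K * B + real L * e"
    using \<open>0 \<le> e\<close> by (intro add_mono mult_right_mono) simp_all
  have "(\<Sum>n\<in>Ns. b n) = (\<Sum>n\<in>Ns \<inter> R. b n)"
    by (rule sum.mono_neutral_right) (use \<open>finite Ns\<close> outside in \<open>auto simp: R_def\<close>)
  also have "\<dots> \<le> (\<Sum>n\<in>R. b n)"
    by (rule sum_mono2) (auto simp: R_def nonneg)
  also have "\<dots> = (\<Sum>n\<in>R - Mid. b n) + (\<Sum>n\<in>Mid. b n)"
    by (rule sum.subset_diff) (auto simp: R_def Mid_def)
  also have "\<dots> \<le> card (R - Mid) * B + card Mid * e"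
    by (intro add_mono sum_bounded_above bounded inside) (simp add: Mid_def)
  finally show ?thesis
    using card_bound by linarith
qed

lemma sum_WH_coeffs_indicator_translates_le:
  fixes g :: "real \<Rightarrow> complex" and K L :: nat and M \<epsilon> :: real
  assumes [measurable]: "g \<in> borel_measurable lebesgue" "E \<in> sets lebesgue" and "E \<subseteq> {0..<1}"
    and vanish: "\<And>s j. s \<in> E \<Longrightarrow> int K < \<bar>j\<bar> \<Longrightarrow> g (s + of_int j) = 0"
    and bounded: "\<And>s j. s \<in> E \<Longrightarrow> cmod (g (s + of_int j)) \<le> M"
    and small: "\<And>s. s \<in> E \<Longrightarrow> cmod (\<Sum>j\<in>{-int K..int K}. g (s + of_int j)) \<le> \<epsilon>"
    and "finite F"
  shows "(\<Sum>(m, n)\<in>F. (cmod (l2inner (indicator_translates E L) (modul (of_int m) (transl (of_int n) g))))^2)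
       \<le> (4 * real K * ((2 * real K + 1) * M)^2 + real L * \<epsilon>^2) * measure lebesgue E"
proof -
  define G where "G n s = (\<Sum>k<L. g (s + of_int (int k - n)))" for n s
  define b where "b n = (LINT s|lebesgue. indicator E s * (cmod (G n s))^2)" for n
  have [measurable]: "G n \<in> borel_measurable lebesgue" for n
    unfolding G_def by measurable
  have "E \<subseteq> {0..1}"
    using \<open>E \<subseteq> {0..<1}\<close> by auto
  have G_window: "G n s = (\<Sum>j\<in>{-n..int L - 1 - n} \<inter> {-int K..int K}. g (s + of_int j))" if "s \<in> E" for n s
    unfolding G_def using vanish[OF that] by (rule sum_translates_eq_sum_window)
  have "b n \<le> ((2 * real K + 1) * M)^2 * measure lebesgue E" for n
    unfolding b_def
  proof (rule set_integral_norm_sq_le)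
    fix s assume "s \<in> E"
    have "cmod (G n s) \<le> (\<Sum>j\<in>{-n..int L - 1 - n} \<inter> {-int K..int K}. cmod (g (s + of_int j)))"
      unfolding G_window[OF \<open>s \<in> E\<close>] by (rule norm_sum)
    also have "\<dots> \<le> card ({-n..int L - 1 - n} \<inter> {-int K..int K}) * M"
      using bounded[OF \<open>s \<in> E\<close>] by (intro sum_bounded_above) simp
    also have "\<dots> \<le> (2 * real K + 1) * M"
    proof (rule mult_right_mono)
      show "0 \<le> M" using bounded[OF \<open>s \<in> E\<close>, of 0] norm_ge_zero order_trans by blast
      have "card ({-n..int L - 1 - n} \<inter> {-int K..int K}) \<le> card {-int K..int K}"
        by (intro card_mono) auto
      then show "real (card ({-n..int L - 1 - n} \<inter> {-int K..int K})) \<le> 2 * real K + 1"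
        by simp
    qed
    finally show "cmod (G n s) \<le> (2 * real K + 1) * M" .
  qed (use \<open>E \<subseteq> {0..1}\<close> in simp_all)
  moreover have "b n \<le> \<epsilon>^2 * measure lebesgue E" if "n \<in> {int K..int L - 1 - int K}" for n
    unfolding b_def
  proof (rule set_integral_norm_sq_le)
    fix s assume "s \<in> E"
    have "{-n..int L - 1 - n} \<inter> {-int K..int K} = {-int K..int K}"
      using that by auto
    then show "cmod (G n s) \<le> \<epsilon>"
      using small[OF \<open>s \<in> E\<close>] G_window[OF \<open>s \<in> E\<close>] by simp
  qed (use \<open>E \<subseteq> {0..1}\<close> in simp_all)
  moreover have "b n = 0" if "n \<notin> {-int K..int L - 1 + int K}" for n
  proof -
    have "{-n..int L - 1 - n} \<inter> {-int K..int K} = {}"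
      using that by auto
    then have "indicator E s * (cmod (G n s))^2 = 0" for s
      using G_window[of s n] by (cases "s \<in> E") simp_all
    then show ?thesis
      unfolding b_def by (simp only: integral_zero)
  qed
  moreover have "(\<Sum>(m, n)\<in>F. (cmod (l2inner (indicator_translates E L) (modul (of_int m) (transl (of_int n) g))))^2)
      \<le> (\<Sum>n\<in>snd ` F. b n)"
    using sum_WH_coeffs_indicator_translates_le_integrals[OF assms(1-3) bounded \<open>finite F\<close>]
    by (simp add: b_def G_def)
  ultimately show ?thesis
    using sum_le_window_profile[of "snd ` F" b "((2 * real K + 1) * M)^2 * measure lebesgue E"
        K L "\<epsilon>^2 * measure lebesgue E"] \<open>finite F\<close>
    by (fastforce simp: b_def algebra_simps)
qed

lemma exists_sublevel_set_measure_pos: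
  fixes f :: "'a \<Rightarrow> real"
  assumes [measurable]: "A \<in> sets M" "f \<in> borel_measurable M"
    and "emeasure M A < \<infinity>" and "0 < measure M A"
  shows "\<exists>c::nat. 0 < measure M {x\<in>A. f x \<le> c}"
proof (rule ccontr)
  assume "\<nexists>c::nat. 0 < measure M {x\<in>A. f x \<le> c}"
  then have "measure M {x\<in>A. f x \<le> c} = 0" for c :: nat
    using measure_nonneg[of M] by (meson antisym not_le)
  moreover have "emeasure M {x\<in>A. f x \<le> c} < \<infinity>" for c :: nat
    using emeasure_mono[of "{x\<in>A. f x \<le> c}" A M] \<open>emeasure M A < \<infinity>\<close> by auto
  ultimately have "{x\<in>A. f x \<le> c} \<in> null_sets M" for c :: nat
    by (intro null_setsI) (simp_all add: emeasure_eq_ennreal_measure less_top)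
  then have "(\<Union>c::nat. {x\<in>A. f x \<le> c}) \<in> null_sets M"
    by blast
  moreover have "(\<Union>c::nat. {x\<in>A. f x \<le> c}) = A"
    using real_arch_simple by blast
  ultimately have "A \<in> null_sets M"
    by simp
  then show False
    using \<open>0 < measure M A\<close> by (simp add: measure_def null_setsD1)
qed

lemma AE_translates_vanish_outside_window:
  fixes g :: "real \<Rightarrow> complex" and N :: nat
  assumes "AE t in lebesgue. real N < \<bar>t\<bar> \<longrightarrow> g t = 0"
  shows "AE s in lebesgue. s \<in> {0..<1} \<longrightarrow> (\<forall>j::int. int N < \<bar>j\<bar> \<longrightarrow> g (s + of_int j) = 0)"
proof -
  have "AE s in lebesgue. \<forall>j::int. real N < \<bar>s + of_int j\<bar> \<longrightarrow> g (s + of_int j) = 0"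
    unfolding AE_all_countable using assms by (intro allI AE_lebesgue_translation)
  then show ?thesis
    by eventually_elim (auto simp: abs_if split: if_splits)
qed

lemma infsum_translates_eq_window_sum:
  fixes g :: "real \<Rightarrow> complex" and N :: nat
  assumes "\<And>j. int N < \<bar>j\<bar> \<Longrightarrow> g (s + of_int j) = 0"
  shows "(\<Sum>\<^sub>\<infinity>n::int. g (s + of_int n)) = (\<Sum>j\<in>{-int N..int N}. g (s + of_int j))"
  using assms by (subst infsum_cong_neutral[where T="{-int N..int N}"]) auto

lemma exists_subset_translates_bounded:
  fixes g :: "real \<Rightarrow> complex" and N :: nat
  assumes [measurable]: "g \<in> borel_measurable lebesgue" "E \<in> sets lebesgue"
    and "E \<subseteq> {0..1}" and "0 < measure lebesgue E"
  obtains E' M where "E' \<in> sets lebesgue" "E' \<subseteq> E" "0 < measure lebesgue E'"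
    and "\<And>s j. s \<in> E' \<Longrightarrow> j \<in> {-int N..int N} \<Longrightarrow> cmod (g (s + of_int j)) \<le> M"
proof -
  have "emeasure lebesgue E \<le> emeasure lebesgue {0..1::real}"
    using \<open>E \<subseteq> {0..1}\<close> by (intro emeasure_mono) auto
  then have "emeasure lebesgue E < \<infinity>"
    by (simp add: order_le_less_trans)
  then obtain M :: nat
    where "0 < measure lebesgue {s\<in>E. (\<Sum>j\<in>{-int N..int N}. cmod (g (s + of_int j))) \<le> M}"
    using exists_sublevel_set_measure_pos[of E lebesgue] \<open>0 < measure lebesgue E\<close> by fastforce
  moreover have "cmod (g (s + of_int j)) \<le> (\<Sum>j\<in>{-int N..int N}. cmod (g (s + of_int j)))"
    if "j \<in> {-int N..int N}" for s j
    using that by (intro member_le_sum) auto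
  ultimately show ?thesis
    by (intro that[of "{s\<in>E. (\<Sum>j\<in>{-int N..int N}. cmod (g (s + of_int j))) \<le> M}" M])
       (measurable, auto dest: order_trans)
qed

lemma exists_subset_periodization_small:
  fixes g :: "real \<Rightarrow> complex" and N :: nat
  assumes [measurable]: "g \<in> borel_measurable lebesgue"
    and support: "AE t in lebesgue. real N < \<bar>t\<bar> \<longrightarrow> g t = 0"
    and [measurable]: "E \<in> sets lebesgue" and "E \<subseteq> {0..1}" and "0 < measure lebesgue E"
    and small: "AE t in lebesgue. t \<in> E \<longrightarrow> cmod (\<Sum>\<^sub>\<infinity>n::int. g (t + of_int n)) < \<epsilon>"
  obtains E' where "E' \<in> sets lebesgue" "E' \<subseteq> {0..<1}" "0 < measure lebesgue E'"
    and "\<And>s j. s \<in> E' \<Longrightarrow> int N < \<bar>j\<bar> \<Longrightarrow> g (s + of_int j) = 0"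
    and "\<And>s. s \<in> E' \<Longrightarrow> cmod (\<Sum>j\<in>{-int N..int N}. g (s + of_int j)) \<le> \<epsilon>"
proof -
  define E' where "E' = {s\<in>E. s < 1 \<and> (\<forall>j::int. int N < \<bar>j\<bar> \<longrightarrow> g (s + of_int j) = 0)
      \<and> cmod (\<Sum>j\<in>{-int N..int N}. g (s + of_int j)) < \<epsilon>}"
  have [measurable]: "E' \<in> sets lebesgue"
    unfolding E'_def by measurable
  have "AE s in lebesgue. s \<in> E' \<longleftrightarrow> s \<in> E"
    using AE_translates_vanish_outside_window[OF support] small AE_completion[OF AE_lborel_singleton[of 1]]
  proof eventually_elim
    case (elim s)
    show ?case
    proof
      assume "s \<in> E"
      with \<open>E \<subseteq> {0..1}\<close> elim(3) have "s \<in> {0..<1}" by auto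
      then show "s \<in> E'"
        using \<open>s \<in> E\<close> elim(1,2) infsum_translates_eq_window_sum[of N g s] by (simp add: E'_def)
    qed (simp add: E'_def)
  qed
  then have "0 < measure lebesgue E'"
    using measure_eq_AE[where A=E' and B=E] \<open>0 < measure lebesgue E\<close> by simp
  then show ?thesis
    using \<open>E \<subseteq> {0..1}\<close> by (intro that[of E']) (auto simp: E'_def)
qed

lemma exists_subset_uniform_periodization_bounds:
  fixes g :: "real \<Rightarrow> complex" and N :: nat
  assumes [measurable]: "g \<in> borel_measurable lebesgue"
    and support: "AE t in lebesgue. real N < \<bar>t\<bar> \<longrightarrow> g t = 0"
    and [measurable]: "E \<in> sets lebesgue" and "E \<subseteq> {0..1}" and "0 < measure lebesgue E"
    and small: "AE t in lebesgue. t \<in> E \<longrightarrow> cmod (\<Sum>\<^sub>\<infinity>n::int. g (t + of_int n)) < \<epsilon>"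
  obtains E' M where "E' \<in> sets lebesgue" "E' \<subseteq> {0..<1}" "0 < measure lebesgue E'"
    and "\<And>s j. s \<in> E' \<Longrightarrow> int N < \<bar>j\<bar> \<Longrightarrow> g (s + of_int j) = 0"
    and "\<And>s j. s \<in> E' \<Longrightarrow> cmod (g (s + of_int j)) \<le> M"
    and "\<And>s. s \<in> E' \<Longrightarrow> cmod (\<Sum>j\<in>{-int N..int N}. g (s + of_int j)) \<le> \<epsilon>"
proof -
  obtain E1 where E1: "E1 \<in> sets lebesgue" "E1 \<subseteq> {0..<1}" "0 < measure lebesgue E1"
    and vanish: "\<And>s j. s \<in> E1 \<Longrightarrow> int N < \<bar>j\<bar> \<Longrightarrow> g (s + of_int j) = 0"
    and window: "\<And>s. s \<in> E1 \<Longrightarrow> cmod (\<Sum>j\<in>{-int N..int N}. g (s + of_int j)) \<le> \<epsilon>"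
    using exists_subset_periodization_small[OF assms] by blast
  have "E1 \<subseteq> {0..1}"
    using E1(2) by auto
  then obtain E' M where E': "E' \<in> sets lebesgue" "E' \<subseteq> E1" "0 < measure lebesgue E'"
    and bounded: "\<And>s j. s \<in> E' \<Longrightarrow> j \<in> {-int N..int N} \<Longrightarrow> cmod (g (s + of_int j)) \<le> M"
    using exists_subset_translates_bounded[OF assms(1) E1(1) _ E1(3)] by blast
  show ?thesis
  proof (rule that[OF E'(1) _ E'(3)])
    show "E' \<subseteq> {0..<1}"
      using E'(2) E1(2) by blast
    show "g (s + of_int j) = 0" if "s \<in> E'" "int N < \<bar>j\<bar>" for s j
      using vanish that E'(2) by blast
    show "cmod (\<Sum>j\<in>{-int N..int N}. g (s + of_int j)) \<le> \<epsilon>" if "s \<in> E'" for s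
      using window that E'(2) by blast
    show "cmod (g (s + of_int j)) \<le> M" if "s \<in> E'" for s j
    proof (cases "j \<in> {-int N..int N}")
      case False
      have "cmod (g (s + of_int 0)) \<le> M"
        using that by (intro bounded) auto
      then have "0 \<le> M"
        by (meson norm_ge_zero order_trans)
      moreover have "g (s + of_int j) = 0"
        using vanish that E'(2) False by auto
      ultimately show ?thesis
        by simp
    qed (use bounded that in blast)
  qed
qed

lemma compact_support_imp_AE_vanish_outside_interval:
  fixes g :: "real \<Rightarrow> 'a::zero"
  assumes "compact K" and "AE t in M. t \<notin> K \<longrightarrow> g t = 0"
  obtains N :: nat where "AE t in M. real N < \<bar>t\<bar> \<longrightarrow> g t = 0"
proof -
  obtain B where "\<And>x. x \<in> K \<Longrightarrow> \<bar>x\<bar> \<le> B"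
    using compact_imp_bounded[OF \<open>compact K\<close>] unfolding bounded_real by blast
  then have bound: "\<And>x. x \<in> K \<Longrightarrow> \<bar>x\<bar> \<le> real (nat \<lceil>B\<rceil>)"
    by (meson order_trans real_nat_ceiling_ge)
  from assms(2) have "AE t in M. real (nat \<lceil>B\<rceil>) < \<bar>t\<bar> \<longrightarrow> g t = 0"
    by eventually_elim (use bound in \<open>force simp: not_le[symmetric]\<close>)
  then show ?thesis ..
qed

lemma lower_frame_bound_le_window_sum_bound:
  fixes g :: "real \<Rightarrow> complex" and N :: nat
  assumes [measurable]: "g \<in> borel_measurable lebesgue" "E \<in> sets lebesgue"
    and "E \<subseteq> {0..<1}" and "0 < measure lebesgue E"
    and window: "\<And>s j. s \<in> E \<Longrightarrow> int N < \<bar>j\<bar> \<Longrightarrow> g (s + of_int j) = 0"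
      "\<And>s j. s \<in> E \<Longrightarrow> cmod (g (s + of_int j)) \<le> M"
      "\<And>s. s \<in> E \<Longrightarrow> cmod (\<Sum>j\<in>{-int N..int N}. g (s + of_int j)) \<le> \<epsilon>"
    and lower_frame_bound: "\<And>f. f \<in> L2 \<Longrightarrow>
      (\<lambda>(m, n). (cmod (l2inner f (modul (of_int m) (transl (of_int n) g))))^2) summable_on UNIV \<and>
      A * l2norm_sq f \<le> (\<Sum>\<^sub>\<infinity>(m, n). (cmod (l2inner f (modul (of_int m) (transl (of_int n) g))))^2)"
  shows "A \<le> \<epsilon>^2"
proof (rule ccontr)
  assume "\<not> A \<le> \<epsilon>^2"
  define X where "X = 4 * real N * ((2 * real N + 1) * M)^2"
  obtain L :: nat where "X / (A - \<epsilon>^2) < L"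
    using reals_Archimedean2 by blast
  define f where "f = indicator_translates E L"
  have "f \<in> L2"
    using l2norm_sq_indicator_translates(1)[OF assms(2,3)] by (simp add: f_def)
  have "A * (real L * measure lebesgue E) = A * l2norm_sq f"
    using l2norm_sq_indicator_translates(2)[OF assms(2,3)] by (simp add: f_def)
  also have "\<dots> \<le> (\<Sum>\<^sub>\<infinity>(m, n). (cmod (l2inner f (modul (of_int m) (transl (of_int n) g))))^2)"
    using lower_frame_bound[OF \<open>f \<in> L2\<close>] by simp
  also have "\<dots> \<le> (X + real L * \<epsilon>^2) * measure lebesgue E"
    using lower_frame_bound[OF \<open>f \<in> L2\<close>] sum_WH_coeffs_indicator_translates_le[OF assms(1-3) window]
    by (intro infsum_le_finite_sums) (simp_all add: f_def X_def)
  finally have "(A * real L) * measure lebesgue E \<le> (X + real L * \<epsilon>^2) * measure lebesgue E"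
    by (simp only: mult.assoc)
  then have "A * real L \<le> X + real L * \<epsilon>^2"
    using \<open>0 < measure lebesgue E\<close> by (rule mult_right_le_imp_le)
  then have "(A - \<epsilon>^2) * real L \<le> X"
    by (simp add: algebra_simps)
  then show False
    using \<open>X / (A - \<epsilon>^2) < L\<close> \<open>\<not> A \<le> \<epsilon>^2\<close> by (simp add: field_simps)
qed

theorem proposition2p2:
  fixes g :: "real \<Rightarrow> complex"
  assumes "g \<in> L2"
    and "\<exists>K. compact K \<and> (AE t in lebesgue. t \<notin> K \<longrightarrow> g t = 0)"
    and "\<forall>\<epsilon>>0. \<exists>E. E \<in> sets lebesgue \<and> E \<subseteq> {0..1} \<and> measure lebesgue E > 0 \<and>
            (AE t in lebesgue. t \<in> E \<longrightarrow> cmod (\<Sum>\<^sub>\<infinity>n::int. g (t + of_int n)) < \<epsilon>)"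
  shows "\<not> WH_frame g 1 1"
proof
  assume "WH_frame g 1 1"
  then obtain A where "0 < A" and lower_frame_bound: "\<And>f. f \<in> L2 \<Longrightarrow>
      (\<lambda>(m, n). (cmod (l2inner f (modul (of_int m) (transl (of_int n) g))))^2) summable_on UNIV \<and>
      A * l2norm_sq f \<le> (\<Sum>\<^sub>\<infinity>(m, n). (cmod (l2inner f (modul (of_int m) (transl (of_int n) g))))^2)"
    unfolding WH_frame_def by auto
  have g_meas: "g \<in> borel_measurable lebesgue"
    using \<open>g \<in> L2\<close> by (simp add: L2_def)
  obtain N where support: "AE t in lebesgue. real N < \<bar>t\<bar> \<longrightarrow> g t = 0"
    using assms(2) compact_support_imp_AE_vanish_outside_interval by metis
  have "0 < sqrt (A / 2)"
    using \<open>0 < A\<close> by simp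
  then obtain E where "E \<in> sets lebesgue" "E \<subseteq> {0..1}" "0 < measure lebesgue E"
    and "AE t in lebesgue. t \<in> E \<longrightarrow> cmod (\<Sum>\<^sub>\<infinity>n::int. g (t + of_int n)) < sqrt (A / 2)"
    using assms(3) by blast
  then obtain E' M where "E' \<in> sets lebesgue" "E' \<subseteq> {0..<1}" "0 < measure lebesgue E'"
    and "\<And>s j. s \<in> E' \<Longrightarrow> int N < \<bar>j\<bar> \<Longrightarrow> g (s + of_int j) = 0"
      "\<And>s j. s \<in> E' \<Longrightarrow> cmod (g (s + of_int j)) \<le> M"
      "\<And>s. s \<in> E' \<Longrightarrow> cmod (\<Sum>j\<in>{-int N..int N}. g (s + of_int j)) \<le> sqrt (A / 2)"
    using exists_subset_uniform_periodization_bounds[OF g_meas support] by blast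
  then have "A \<le> (sqrt (A / 2))^2"
    using lower_frame_bound by (intro lower_frame_bound_le_window_sum_bound[OF g_meas]) blast+
  with \<open>0 < A\<close> show False
    by simp
qed

end
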